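(* Let $A,B\in S(2n,\mathbb{R})$, let $\{v_1,\dots,v_{2n}\}$ be a symplectic basis for $A$ and $\{w_1,\dots,w_{2n}\}$ a symplectic basis for $B$. If $v_i^TJv_j = w_i^TJw_j$ for all $1\le i<j\le 2n$ (equality of the ordered tuples of basis-values), then there exists $P\in\operatorname{Sp}(2n)$ with $A = P^TBP$.
   Context: $S(2n,\mathbb{R})$ is the set of invertible skew-symmetric real $2n\times2n$ matrices; $J$ is block-diagonal with $n$ blocks $J_0 = \begin{bmatrix} 0 & 1 \\ -1 & 0\end{bmatrix}$; $\operatorname{Sp}(2n) = \{P : P^TJP = J\}$. A basis $\{v_1,\dots,v_{2n}\}$ of $\mathbb{R}^{2n}$ is a symplectic basis for $A$ if $v_{2i-1}^TAv_{2i} = 1$ for $1\le i\le n$ and $v_i^TAv_j = 0$ for all $i<j$ with $(i,j)\neq(2k-1,2k)$ for every $k$. *)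

theory Defs
  imports "Jordan_Normal_Form.Matrix"
begin

definition skew_inv :: "nat \<Rightarrow> real mat set" where
  "skew_inv n = {A. A \<in> carrier_mat (2*n) (2*n) \<and> transpose_mat A = - A \<and> invertible_mat A}"

text \<open>Standard symplectic matrix J: block diagonal with n blocks [[0,1],[-1,0]] (0-indexed entries).\<close>
definition J_mat :: "nat \<Rightarrow> real mat" where
  "J_mat n = mat (2*n) (2*n) (\<lambda>(i,j). if even i \<and> j = i + 1 then 1
                                      else if odd i \<and> i = j + 1 then -1 else 0)"

definition Sp :: "nat \<Rightarrow> real mat set" where
  "Sp n = {P. P \<in> carrier_mat (2*n) (2*n) \<and> transpose_mat P * J_mat n * P = J_mat n}"

definition bform :: "real vec \<Rightarrow> real mat \<Rightarrow> real vec \<Rightarrow> real" where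
  "bform x A y = x \<bullet> (A *\<^sub>v y)"

definition is_basis :: "nat \<Rightarrow> (nat \<Rightarrow> real vec) \<Rightarrow> bool" where
  "is_basis n v \<longleftrightarrow>
     (\<forall>i\<in>{1..2*n}. v i \<in> carrier_vec (2*n)) \<and>
     (\<forall>c. finsum_vec TYPE(real) (2*n) (\<lambda>i. c i \<cdot>\<^sub>v v i) {1..2*n} = 0\<^sub>v (2*n)
            \<longrightarrow> (\<forall>i\<in>{1..2*n}. c i = 0)) \<and>
     (\<forall>x\<in>carrier_vec (2*n). \<exists>c. x = finsum_vec TYPE(real) (2*n) (\<lambda>i. c i \<cdot>\<^sub>v v i) {1..2*n})"

definition symplectic_basis :: "nat \<Rightarrow> real mat \<Rightarrow> (nat \<Rightarrow> real vec) \<Rightarrow> bool" where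
  "symplectic_basis n A v \<longleftrightarrow>
     is_basis n v \<and>
     (\<forall>i\<in>{1..n}. bform (v (2*i - 1)) A (v (2*i)) = 1) \<and>
     (\<forall>i j. 1 \<le> i \<and> i < j \<and> j \<le> 2*n \<and> (\<forall>k. (i, j) \<noteq> (2*k - 1, 2*k))
            \<longrightarrow> bform (v i) A (v j) = 0)"

end

theory Submission
  imports Defs
begin

text \<open>Let V and W be the matrices whose columns are the v_i and the w_i. The symplectic-basis
  conditions say that V^T A V = J = W^T B W, and the hypothesis says that the skew-symmetric
  matrices V^T J V and W^T J W agree above the diagonal, hence are equal. So P = W V^-1
  satisfies P^T B P = V^-T J V^-1 = A and P^T J P = V^-T (V^T J V) V^-1 = J.\<close>

lemma skew_mat_eqI:
  fixes M N :: "'a :: {idom, ring_char_0} mat"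
  assumes M: "M \<in> carrier_mat m m" and N: "N \<in> carrier_mat m m"
    and skew_M: "transpose_mat M = - M" and skew_N: "transpose_mat N = - N"
    and upper: "\<And>r c. r < c \<Longrightarrow> c < m \<Longrightarrow> M $$ (r, c) = N $$ (r, c)"
  shows "M = N"
proof (rule eq_matI)
  have skew_entry: "X $$ (r, c) = - X $$ (c, r)"
    if "X \<in> carrier_mat m m" "transpose_mat X = - X" "r < m" "c < m" for X :: "'a mat" and r c
    using that by (metis carrier_matD index_transpose_mat index_uminus_mat(1) minus_minus)
  fix r c assume "r < dim_row N" "c < dim_col N"
  then have r: "r < m" and c: "c < m" using N by auto
  consider "r < c" | "r = c" | "c < r" by linarith
  then show "M $$ (r, c) = N $$ (r, c)"
  proof cases
    case 1 then show ?thesis using upper c by blast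
  next
    case 2 then show ?thesis
      using skew_entry[OF M skew_M r r] skew_entry[OF N skew_N r r] by simp
  next
    case 3 then show ?thesis
      using upper[OF 3 r] skew_entry[OF M skew_M r c] skew_entry[OF N skew_N r c] by simp
  qed
qed (use M N in auto)

lemma skew_congruence:
  fixes V A :: "'a :: comm_ring mat"
  assumes V: "V \<in> carrier_mat m m" and A: "A \<in> carrier_mat m m"
    and skew: "transpose_mat A = - A"
  shows "transpose_mat (transpose_mat V * A * V) = - (transpose_mat V * A * V)"
proof -
  have "transpose_mat (transpose_mat V * A * V) = transpose_mat V * transpose_mat A * V"
    using V A by (simp add: transpose_mult[of _ m m _ m] assoc_mult_mat[of _ m m _ m _ m])
  then show ?thesis using V A by (simp add: skew)
qed

lemma congruence_carrier:
  "V \<in> carrier_mat m m \<Longrightarrow> A \<in> carrier_mat m m \<Longrightarrow> transpose_mat V * A * V \<in> carrier_mat m m"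
  by (meson mult_carrier_mat transpose_carrier_mat)

lemma congruence_entry:
  assumes V: "V \<in> carrier_mat m m" and A: "A \<in> carrier_mat m m" and "r < m" "c < m"
  shows "(transpose_mat V * A * V) $$ (r, c) = bform (col V r) A (col V c)"
proof -
  have "transpose_mat V * A * V = transpose_mat V * (A * V)"
    using V A by (intro assoc_mult_mat[of _ m m _ m _ m]) auto
  then show ?thesis using assms unfolding bform_def by (simp add: col_mult2[OF A V])
qed

lemma congruence_mult:
  fixes X Y M :: "'a :: comm_ring mat"
  assumes X: "X \<in> carrier_mat m m" and Y: "Y \<in> carrier_mat m m" and M: "M \<in> carrier_mat m m"
  shows "transpose_mat (X * Y) * M * (X * Y) = transpose_mat Y * (transpose_mat X * M * X) * Y"
  using X Y M by (simp add: transpose_mult[OF X Y] assoc_mult_mat[of _ m m _ m _ m])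

lemma congruence_transfer:
  fixes V W V' A B :: "'a :: comm_ring_1 mat"
  assumes V: "V \<in> carrier_mat m m" and W: "W \<in> carrier_mat m m" and V': "V' \<in> carrier_mat m m"
    and A: "A \<in> carrier_mat m m" and B: "B \<in> carrier_mat m m"
    and right_inverse: "V * V' = 1\<^sub>m m"
    and same_gram: "transpose_mat V * A * V = transpose_mat W * B * W"
  shows "transpose_mat (W * V') * B * (W * V') = A"
proof -
  have "transpose_mat (W * V') * B * (W * V') = transpose_mat V' * (transpose_mat W * B * W) * V'"
    by (rule congruence_mult[OF W V' B])
  also have "\<dots> = transpose_mat (V * V') * A * (V * V')"
    by (simp only: congruence_mult[OF V V' A] same_gram)
  also have "\<dots> = A" using A by (simp add: right_inverse)
  finally show ?thesis .
qed

lemma J_mat_carrier: "J_mat n \<in> carrier_mat (2*n) (2*n)"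
  unfolding J_mat_def by auto

lemma transpose_J_mat: "transpose_mat (J_mat n) = - J_mat n"
  unfolding J_mat_def by (intro eq_matI) auto

text \<open>Column c of basis_mat n v is v (c + 1), since bases are indexed from 1.\<close>
definition basis_mat :: "nat \<Rightarrow> (nat \<Rightarrow> real vec) \<Rightarrow> real mat" where
  "basis_mat n v = mat (2*n) (2*n) (\<lambda>(r, c). v (Suc c) $ r)"

lemma basis_mat_carrier: "basis_mat n v \<in> carrier_mat (2*n) (2*n)"
  unfolding basis_mat_def by auto

lemma basis_carrier_vec: "is_basis n v \<Longrightarrow> i \<in> {1..2*n} \<Longrightarrow> v i \<in> carrier_vec (2*n)"
  unfolding is_basis_def by auto

lemma col_basis_mat:
  assumes "is_basis n v" "c < 2*n"
  shows "col (basis_mat n v) c = v (Suc c)"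
  using assms basis_carrier_vec[OF assms(1), of "Suc c"] unfolding basis_mat_def
  by (intro eq_vecI) auto

lemma finsum_eq_basis_mat_mult_vec:
  assumes v: "\<And>i. i \<in> {1..2*n} \<Longrightarrow> v i \<in> carrier_vec (2*n)"
  shows "finsum_vec TYPE(real) (2*n) (\<lambda>i. x i \<cdot>\<^sub>v v i) {1..2*n}
           = basis_mat n v *\<^sub>v vec (2*n) (\<lambda>j. x (Suc j))"
proof (rule eq_vecI)
  fix r assume "r < dim_vec (basis_mat n v *\<^sub>v vec (2*n) (\<lambda>j. x (Suc j)))"
  then have r: "r < 2*n" using basis_mat_carrier[of n v] by simp
  have dim_v: "dim_vec (v i) = 2*n" if "i \<in> {1..2*n}" for i
    using v[OF that] by simp
  have "finsum_vec TYPE(real) (2*n) (\<lambda>i. x i \<cdot>\<^sub>v v i) {1..2*n} $ r = (\<Sum>i\<in>{1..2*n}. x i * v i $ r)"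
    using v r by (subst index_finsum_vec) (auto intro!: sum.cong simp: dim_v)
  also have "\<dots> = (\<Sum>j<2*n. x (Suc j) * v (Suc j) $ r)"
    using sum.atLeast1_atMost_eq by simp
  also have "\<dots> = (basis_mat n v *\<^sub>v vec (2*n) (\<lambda>j. x (Suc j))) $ r"
    using r unfolding basis_mat_def by (simp add: scalar_prod_def lessThan_atLeast0 mult.commute)
  finally show "finsum_vec TYPE(real) (2*n) (\<lambda>i. x i \<cdot>\<^sub>v v i) {1..2*n} $ r
      = (basis_mat n v *\<^sub>v vec (2*n) (\<lambda>j. x (Suc j))) $ r" .
next
  have "finsum_vec TYPE(real) (2*n) (\<lambda>i. x i \<cdot>\<^sub>v v i) {1..2*n} \<in> carrier_vec (2*n)"
    using v by (intro finsum_vec_closed) auto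
  then show "dim_vec (finsum_vec TYPE(real) (2*n) (\<lambda>i. x i \<cdot>\<^sub>v v i) {1..2*n})
      = dim_vec (basis_mat n v *\<^sub>v vec (2*n) (\<lambda>j. x (Suc j)))"
    using basis_mat_carrier[of n v] by simp
qed

lemma basis_mat_right_inverse:
  assumes basis: "is_basis n v"
  obtains V' where "V' \<in> carrier_mat (2*n) (2*n)" and "basis_mat n v * V' = 1\<^sub>m (2*n)"
proof -
  have "\<forall>k. \<exists>x. k < 2*n \<longrightarrow>
          unit_vec (2*n) k = finsum_vec TYPE(real) (2*n) (\<lambda>i. x i \<cdot>\<^sub>v v i) {1..2*n}"
    using basis unfolding is_basis_def by (meson unit_vec_carrier)
  then obtain x where x: "\<And>k. k < 2*n \<Longrightarrow>
          unit_vec (2*n) k = finsum_vec TYPE(real) (2*n) (\<lambda>i. x k i \<cdot>\<^sub>v v i) {1..2*n}"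
    by metis
  define V' where "V' = mat (2*n) (2*n) (\<lambda>(j, k). x k (Suc j))"
  have V': "V' \<in> carrier_mat (2*n) (2*n)" unfolding V'_def by simp
  have "basis_mat n v * V' = 1\<^sub>m (2*n)"
  proof (rule mat_col_eqI)
    fix k assume "k < dim_col (1\<^sub>m (2*n) :: real mat)"
    then have k: "k < 2*n" by simp
    have "col (basis_mat n v * V') k = basis_mat n v *\<^sub>v vec (2*n) (\<lambda>j. x k (Suc j))"
      using col_mult2[OF basis_mat_carrier V' k] k unfolding V'_def by simp
    also have "\<dots> = unit_vec (2*n) k"
      using x[OF k] finsum_eq_basis_mat_mult_vec basis_carrier_vec[OF basis] by metis
    finally show "col (basis_mat n v * V') k = col (1\<^sub>m (2*n)) k" using k by simp
  qed (use V' basis_mat_carrier[of n v] in auto)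
  with V' that show ?thesis by blast
qed

lemma basis_mat_congruence_entry:
  assumes "is_basis n v" and "A \<in> carrier_mat (2*n) (2*n)" and "r < 2*n" "c < 2*n"
  shows "(transpose_mat (basis_mat n v) * A * basis_mat n v) $$ (r, c)
           = bform (v (Suc r)) A (v (Suc c))"
  using congruence_entry[OF basis_mat_carrier assms(2-4)] col_basis_mat[OF assms(1)] assms(3,4)
  by simp

lemma symplectic_basis_congruence_J:
  assumes A: "A \<in> skew_inv n" and symplectic: "symplectic_basis n A v"
  shows "transpose_mat (basis_mat n v) * A * basis_mat n v = J_mat n"
proof (rule skew_mat_eqI)
  have A_carrier: "A \<in> carrier_mat (2*n) (2*n)" and skew: "transpose_mat A = - A"
    using A unfolding skew_inv_def by auto
  have basis: "is_basis n v"
    and one: "\<And>i. i \<in> {1..n} \<Longrightarrow> bform (v (2*i - 1)) A (v (2*i)) = 1"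
    and zero: "\<And>i j. 1 \<le> i \<Longrightarrow> i < j \<Longrightarrow> j \<le> 2*n \<Longrightarrow> (\<forall>k. (i, j) \<noteq> (2*k - 1, 2*k))
                 \<Longrightarrow> bform (v i) A (v j) = 0"
    using symplectic unfolding symplectic_basis_def by auto
  show "transpose_mat (basis_mat n v) * A * basis_mat n v \<in> carrier_mat (2*n) (2*n)"
    by (rule congruence_carrier[OF basis_mat_carrier A_carrier])
  show "transpose_mat (transpose_mat (basis_mat n v) * A * basis_mat n v)
      = - (transpose_mat (basis_mat n v) * A * basis_mat n v)"
    by (rule skew_congruence[OF basis_mat_carrier A_carrier skew])
  fix r c assume rc: "r < c" and c: "c < 2*n"
  have entry: "(transpose_mat (basis_mat n v) * A * basis_mat n v) $$ (r, c)
      = bform (v (Suc r)) A (v (Suc c))"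
    using basis_mat_congruence_entry[OF basis A_carrier] rc c by simp
  show "(transpose_mat (basis_mat n v) * A * basis_mat n v) $$ (r, c) = J_mat n $$ (r, c)"
  proof (cases "even r \<and> c = r + 1")
    case True
    then obtain k where k: "r = 2*k" by blast
    have "Suc k \<in> {1..n}" using True k c by auto
    from one[OF this] have "bform (v (Suc r)) A (v (Suc c)) = 1" using True k by simp
    then show ?thesis using entry True k c unfolding J_mat_def by simp
  next
    case False
    have "(Suc r, Suc c) \<noteq> (2*k - 1, 2*k)" for k
      using False rc by (cases k) auto
    then have "bform (v (Suc r)) A (v (Suc c)) = 0" using zero[of "Suc r" "Suc c"] rc c by simp
    then show ?thesis using entry False rc c unfolding J_mat_def by simp
  qed
qed (simp_all add: J_mat_carrier transpose_J_mat)

lemma basis_mat_congruence_eqI: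
  assumes v: "is_basis n v" and w: "is_basis n w"
    and M: "M \<in> carrier_mat (2*n) (2*n)" and skew: "transpose_mat M = - M"
    and same_values: "\<forall>i j. 1 \<le> i \<and> i < j \<and> j \<le> 2*n \<longrightarrow>
                               bform (v i) M (v j) = bform (w i) M (w j)"
  shows "transpose_mat (basis_mat n v) * M * basis_mat n v
           = transpose_mat (basis_mat n w) * M * basis_mat n w"
proof (rule skew_mat_eqI)
  fix r c assume "r < c" "c < 2*n"
  then show "(transpose_mat (basis_mat n v) * M * basis_mat n v) $$ (r, c)
      = (transpose_mat (basis_mat n w) * M * basis_mat n w) $$ (r, c)"
    using basis_mat_congruence_entry[OF v M] basis_mat_congruence_entry[OF w M] same_values
    by simp
qed (use congruence_carrier[OF basis_mat_carrier M] skew_congruence[OF basis_mat_carrier M skew]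
     in auto)

theorem mainTheorem15:
  fixes n :: nat and A B :: "real mat" and v w :: "nat \<Rightarrow> real vec"
  assumes "A \<in> skew_inv n" and "B \<in> skew_inv n"
    and "symplectic_basis n A v" and "symplectic_basis n B w"
    and "\<forall>i j. 1 \<le> i \<and> i < j \<and> j \<le> 2*n \<longrightarrow>
           bform (v i) (J_mat n) (v j) = bform (w i) (J_mat n) (w j)"
  shows "\<exists>P \<in> Sp n. A = transpose_mat P * B * P"
proof -
  have A: "A \<in> carrier_mat (2*n) (2*n)" and B: "B \<in> carrier_mat (2*n) (2*n)"
    using assms(1,2) unfolding skew_inv_def by auto
  have v: "is_basis n v" and w: "is_basis n w"
    using assms(3,4) unfolding symplectic_basis_def by auto
  obtain V' where V': "V' \<in> carrier_mat (2*n) (2*n)" and inverse: "basis_mat n v * V' = 1\<^sub>m (2*n)"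
    using basis_mat_right_inverse[OF v] .
  define P where "P = basis_mat n w * V'"
  have "transpose_mat (basis_mat n v) * A * basis_mat n v
      = transpose_mat (basis_mat n w) * B * basis_mat n w"
    using symplectic_basis_congruence_J[OF assms(1,3)] symplectic_basis_congruence_J[OF assms(2,4)]
    by simp
  then have "transpose_mat P * B * P = A"
    unfolding P_def by (rule congruence_transfer[OF basis_mat_carrier basis_mat_carrier V' A B inverse])
  moreover have "transpose_mat P * J_mat n * P = J_mat n"
    unfolding P_def
    by (rule congruence_transfer[OF basis_mat_carrier basis_mat_carrier V' J_mat_carrier J_mat_carrier
          inverse basis_mat_congruence_eqI[OF v w J_mat_carrier transpose_J_mat assms(5)]])
  moreover have "P \<in> carrier_mat (2*n) (2*n)"
    unfolding P_def using basis_mat_carrier V' by (rule mult_carrier_mat)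
  ultimately show ?thesis unfolding Sp_def by auto
qed

end
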